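(* Let $m\ge n\ge k$ be positive integers, $A\in\mathbb{R}^{m\times n}$ with $A^TA=I_n$, $x^*\in\mathbb{R}^n$ with support $S^*$, $|S^*|\le k$, and $y=Ax^*$ (i.e. $e=0$). Then for every initialization $\mathcal{X}^0$ and $\eta>0$ of SEA, $B=\sup_{t\in\mathbb{N}}\|u^t-\eta A^T(Ax^t-y)\|_\infty=0$. As a consequence, for every such $x^*$, for the initialization $\mathcal{X}^0=0$ and every $\eta>0$, if SEA is run for $N>k+1$ iterations, then $S^*\subseteq S^{t_{BEST}}$ and $x^{t_{BEST}}=x^*$.
   Context: $S^*=\{i:x^*_i\neq0\}$. For $v\in\mathbb{R}^n$, $\mathrm{largest}_k(v)$ is the set of indices of the $k$ entries of $v$ with largest absolute value (ties broken by selecting the highest indices). For $S\subseteq\{1,\dots,n\}$, $A_S$ is the submatrix of columns indexed by $S$, $v_S$ the restriction of a vector to $S$, $A_S^\dagger$ the Moore–Penrose pseudoinverse of $A_S$. SEA with initialization $\mathcal{X}^0$ and step size $\eta$ generates, for $t=0,1,2,\dots$: $S^t=\mathrm{largest}_k(\mathcal{X}^t)$; $x^t_i=0$ for $i\notin S^t$ and $x^t_{S^t}=A_{S^t}^\dagger y$; $\mathcal{X}^{t+1}=\mathcal{X}^t-\eta A^T(Ax^t-y)$. When run for $N$ iterations (computing $x^0,\dots,x^{N-1}$), SEA outputs $x^{t_{BEST}}$ with $t_{BEST}\in\arg\min_{t'\in\{0,\dots,N-1\}}\|Ax^{t'}-y\|_2$. The oracle direction is $u^t_i=-\eta x^*_i$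 if $i\in S^*\setminus S^t$ and $u^t_i=0$ otherwise. *)

theory Defs
  imports Complex_Main "Jordan_Normal_Form.Matrix"
begin

text \<open>Vectors/matrices are Jordan_Normal_Form vec/mat; indices are 0-based,
  i.e. index i here corresponds to index i+1 in the paper.\<close>

definition supp_vec :: "real vec \<Rightarrow> nat set" where
  "supp_vec v = {i. i < dim_vec v \<and> v $ i \<noteq> 0}"

definition norm2_vec :: "real vec \<Rightarrow> real" where
  "norm2_vec v = sqrt (\<Sum>i<dim_vec v. (v $ i)^2)"

definition norminf_vec :: "real vec \<Rightarrow> real" where
  "norminf_vec v = Max (insert 0 {\<bar>v $ i\<bar> | i. i < dim_vec v})"

definition largest_k :: "nat \<Rightarrow> real vec \<Rightarrow> nat set" where
  "largest_k k v = {i. i < dim_vec v \<and>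
     card {j. j < dim_vec v \<and> (\<bar>v $ j\<bar> > \<bar>v $ i\<bar> \<or> (\<bar>v $ j\<bar> = \<bar>v $ i\<bar> \<and> j > i))} < k}"

definition pinv :: "real mat \<Rightarrow> real mat" where
  "pinv M = (THE B. B \<in> carrier_mat (dim_col M) (dim_row M) \<and>
      M * B * M = M \<and> B * M * B = B \<and>
      transpose_mat (M * B) = M * B \<and> transpose_mat (B * M) = B * M)"

definition sub_cols :: "real mat \<Rightarrow> nat set \<Rightarrow> real mat" where
  "sub_cols A S = mat_of_cols (dim_row A) (map (col A) (sorted_list_of_set S))"

definition pinv_sol :: "real mat \<Rightarrow> nat set \<Rightarrow> real vec \<Rightarrow> real vec" where
  "pinv_sol A S y = vec (dim_col A)
     (\<lambda>i. if i \<in> S then (pinv (sub_cols A S) *\<^sub>v y) $ card {j \<in> S. j < i} else 0)"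

primrec sea_X :: "real mat \<Rightarrow> real vec \<Rightarrow> nat \<Rightarrow> real \<Rightarrow> real vec \<Rightarrow> nat \<Rightarrow> real vec" where
  "sea_X A y k \<eta> X0 0 = X0"
| "sea_X A y k \<eta> X0 (Suc t) =
     (let X = sea_X A y k \<eta> X0 t; x = pinv_sol A (largest_k k X) y
      in X - \<eta> \<cdot>\<^sub>v (transpose_mat A *\<^sub>v (A *\<^sub>v x - y)))"

definition sea_S :: "real mat \<Rightarrow> real vec \<Rightarrow> nat \<Rightarrow> real \<Rightarrow> real vec \<Rightarrow> nat \<Rightarrow> nat set" where
  "sea_S A y k \<eta> X0 t = largest_k k (sea_X A y k \<eta> X0 t)"

definition sea_x :: "real mat \<Rightarrow> real vec \<Rightarrow> nat \<Rightarrow> real \<Rightarrow> real vec \<Rightarrow> nat \<Rightarrow> real vec" where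
  "sea_x A y k \<eta> X0 t = pinv_sol A (sea_S A y k \<eta> X0 t) y"

definition oracle_u :: "real mat \<Rightarrow> real vec \<Rightarrow> real vec \<Rightarrow> nat \<Rightarrow> real \<Rightarrow> real vec \<Rightarrow> nat \<Rightarrow> real vec" where
  "oracle_u A xs y k \<eta> X0 t = vec (dim_vec xs)
     (\<lambda>i. if i \<in> supp_vec xs \<and> i \<notin> sea_S A y k \<eta> X0 t then - \<eta> * xs $ i else 0)"

end

theory Submission
  imports Defs "Jordan_Normal_Form.DL_Missing_Sublist"
begin

(*
  When A has orthonormal columns, the pseudoinverse of A_S is its transpose, so x^t is x*
  restricted to S^t and the SEA step -eta A^T (A x^t - y) = eta (x* - x^t) is exactly the
  oracle step u^t; hence B = 0.

  From X^0 = 0 the iterates are X^t_i = eta c_i x*_i, where c_i counts the earlier steps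
  that missed i. So the support of X^t lies in S*, has at most k elements and is always
  selected. An index of S* missed at step t is therefore zero in X^t, i.e. it was selected
  at every earlier step; the indices missed at steps 0, ..., k are then distinct elements
  of S*, which is impossible. So S* is captured by some S^s with s <= k, where the residual
  vanishes; the best iterate then also has zero residual, which forces x^(t_BEST) = x*.
*)

lemma sorted_list_of_set_eq_nths_upt:
  fixes S :: "nat set"
  assumes "S \<subseteq> {..<n}"
  shows "sorted_list_of_set S = nths [0..<n] S"
proof -
  have "set (nths [0..<n] S) = S" using assms by (force simp: set_nths)
  moreover have "sorted_wrt (<) (nths [0..<n] S)"
    by (simp add: strict_sorted_iff sorted_nths)
  ultimately show ?thesis
    using assms by (metis distinct_card finite_lessThan finite_subset
        sorted_list_of_set_unique strict_sorted_iff)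
qed

lemma nth_sorted_list_of_set_card_less:
  fixes S :: "nat set"
  assumes "S \<subseteq> {..<n}" and "i \<in> S"
  shows "sorted_list_of_set S ! card {j \<in> S. j < i} = i"
proof -
  have "{j \<in> S. j < i} = {j. j < i \<and> j \<in> S}" by blast
  then show ?thesis using nth_nths_card[of i "[0..<n]" S] assms
    by (auto simp: sorted_list_of_set_eq_nths_upt)
qed

lemma finite_supp_vec: "finite (supp_vec v)"
  unfolding supp_vec_def by simp

lemma supp_vec_subset_largest_k:
  assumes "card (supp_vec v) \<le> k"
  shows "supp_vec v \<subseteq> largest_k k v"
proof
  fix i assume i: "i \<in> supp_vec v"
  let ?beats = "{j. j < dim_vec v \<and> (\<bar>v $ j\<bar> > \<bar>v $ i\<bar> \<or> (\<bar>v $ j\<bar> = \<bar>v $ i\<bar> \<and> j > i))}"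
  have "?beats \<subseteq> supp_vec v - {i}" using i by (auto simp: supp_vec_def)
  then have "card ?beats \<le> card (supp_vec v - {i})"
    by (intro card_mono) (simp_all add: finite_supp_vec)
  also have "\<dots> < card (supp_vec v)"
    using finite_supp_vec i by (rule card_Diff1_less)
  finally have "card ?beats < k" using assms by linarith
  moreover have "i < dim_vec v" using i by (simp add: supp_vec_def)
  ultimately show "i \<in> largest_k k v"
    unfolding largest_k_def by blast
qed

lemma norm2_vec_nonneg: "norm2_vec v \<ge> 0"
  unfolding norm2_vec_def by (simp add: sum_nonneg)

lemma norm2_vec_eq_0_iff: "norm2_vec v = 0 \<longleftrightarrow> v = 0\<^sub>v (dim_vec v)"
proof -
  have "norm2_vec v = 0 \<longleftrightarrow> (\<forall>i<dim_vec v. v $ i = 0)"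
    unfolding norm2_vec_def by (auto simp: sum_nonneg_eq_0_iff)
  then show ?thesis by (auto simp: vec_eq_iff)
qed

lemma norminf_vec_zero: "norminf_vec (0\<^sub>v n) = 0"
proof -
  have zero: "insert 0 {\<bar>0\<^sub>v n $ i\<bar> | i. i < dim_vec (0\<^sub>v n)} = {0 :: real}" by auto
  show ?thesis unfolding norminf_vec_def zero by simp
qed

definition restrict_vec :: "nat set \<Rightarrow> real vec \<Rightarrow> real vec" where
  "restrict_vec S v = vec (dim_vec v) (\<lambda>i. if i \<in> S then v $ i else 0)"

lemma restrict_vec_carrier [simp]: "v \<in> carrier_vec n \<Longrightarrow> restrict_vec S v \<in> carrier_vec n"
  unfolding restrict_vec_def by simp

lemma restrict_vec_eq_iff: "restrict_vec S v = v \<longleftrightarrow> supp_vec v \<subseteq> S"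
  unfolding restrict_vec_def supp_vec_def by (auto simp: vec_eq_iff)

lemma sub_cols_carrier:
  assumes "finite S"
  shows "sub_cols A S \<in> carrier_mat (dim_row A) (card S)"
  unfolding sub_cols_def using assms by auto

lemma col_sub_cols:
  assumes "finite S" and "q < card S"
  shows "col (sub_cols A S) q = col A (sorted_list_of_set S ! q)"
  unfolding sub_cols_def using assms by (subst col_mat_of_cols) auto

lemma col_sub_cols_card_less:
  assumes "S \<subseteq> {..<n}" and "i \<in> S"
  shows "col (sub_cols A S) (card {j \<in> S. j < i}) = col A i"
proof -
  have "finite S" using assms(1) finite_subset by blast
  moreover have "card {j \<in> S. j < i} < card S"
    using assms(2) \<open>finite S\<close> by (intro psubset_card_mono) auto
  ultimately show ?thesis
    using assms by (simp add: col_sub_cols nth_sorted_list_of_set_card_less)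
qed

lemma pinv_orthonormal_cols:
  fixes M :: "real mat"
  assumes M: "M \<in> carrier_mat a b" and orth: "transpose_mat M * M = 1\<^sub>m b"
  shows "pinv M = transpose_mat M"
  unfolding pinv_def
proof (rule the_equality)
  have Mt: "transpose_mat M \<in> carrier_mat b a" using M by auto
  show "transpose_mat M \<in> carrier_mat (dim_col M) (dim_row M) \<and>
    M * transpose_mat M * M = M \<and> transpose_mat M * M * transpose_mat M = transpose_mat M \<and>
    transpose_mat (M * transpose_mat M) = M * transpose_mat M \<and>
    transpose_mat (transpose_mat M * M) = transpose_mat M * M"
    using M Mt orth by (auto simp: transpose_mult[OF M Mt] assoc_mult_mat[OF M Mt M])
next
  fix B assume B: "B \<in> carrier_mat (dim_col M) (dim_row M) \<and>
      M * B * M = M \<and> B * M * B = B \<and>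
      transpose_mat (M * B) = M * B \<and> transpose_mat (B * M) = B * M"
  then have Bc: "B \<in> carrier_mat b a" using M by auto
  have "transpose_mat M = transpose_mat (M * B * M)" using B by simp
  also have "\<dots> = transpose_mat M * transpose_mat (M * B)"
    using M Bc by (metis mult_carrier_mat transpose_mult)
  also have "\<dots> = transpose_mat M * (M * B)" using B by simp
  also have "\<dots> = (transpose_mat M * M) * B"
    using M Bc by (metis assoc_mult_mat transpose_carrier_mat)
  also have "\<dots> = B" using orth Bc by simp
  finally show "B = transpose_mat M" by simp
qed

lemma sea_X_Suc:
  "sea_X A y k \<eta> X0 (Suc t)
     = sea_X A y k \<eta> X0 t - \<eta> \<cdot>\<^sub>v (transpose_mat A *\<^sub>v (A *\<^sub>v sea_x A y k \<eta> X0 t - y))"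
  unfolding sea_X.simps sea_x_def sea_S_def Let_def ..

lemma sea_X_carrier:
  assumes A: "A \<in> carrier_mat m n" and X0: "X0 \<in> carrier_vec n"
  shows "sea_X A y k \<eta> X0 t \<in> carrier_vec n"
proof (induction t)
  case (Suc t)
  have "dim_vec (sea_X A y k \<eta> X0 (Suc t)) = dim_col A"
    by (simp add: sea_X_Suc del: sea_X.simps)
  then show ?case using A by (metis carrier_matD(2) carrier_vecI)
qed (use X0 in simp)

lemma sea_S_subset:
  assumes "A \<in> carrier_mat m n" and "X0 \<in> carrier_vec n"
  shows "sea_S A y k \<eta> X0 t \<subseteq> {..<n}"
  using sea_X_carrier[OF assms, of y k \<eta> t] unfolding sea_S_def largest_k_def
  by (auto dest: carrier_vecD)

context
  fixes A :: "real mat" and m n :: nat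
  assumes A_carrier: "A \<in> carrier_mat m n" and A_orth: "transpose_mat A * A = 1\<^sub>m n"
begin

lemma transpose_mult_mat_vec_cancel:
  assumes "v \<in> carrier_vec n"
  shows "transpose_mat A *\<^sub>v (A *\<^sub>v v) = v"
  using assms A_carrier A_orth by (metis assoc_mult_mat_vec one_mult_mat_vec transpose_carrier_mat)

lemma transpose_mult_residual:
  assumes "v \<in> carrier_vec n" and "w \<in> carrier_vec n"
  shows "transpose_mat A *\<^sub>v (A *\<^sub>v v - A *\<^sub>v w) = v - w"
  using assms A_carrier transpose_mult_mat_vec_cancel[of "v - w"]
  by (simp add: mult_minus_distrib_mat_vec)

lemma orthonormal_cols_sub_cols:
  assumes S: "S \<subseteq> {..<n}"
  shows "transpose_mat (sub_cols A S) * sub_cols A S = 1\<^sub>m (card S)"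
proof -
  have fin: "finite S" using S finite_subset by blast
  let ?l = "sorted_list_of_set S"
  have idx: "q < card S \<Longrightarrow> ?l ! q < n" for q
    using S fin by (metis length_sorted_list_of_set lessThan_iff nth_mem set_sorted_list_of_set subsetD)
  show ?thesis
  proof (rule eq_matI)
    fix i j assume "i < dim_row (1\<^sub>m (card S))" "j < dim_col (1\<^sub>m (card S))"
    then have i: "i < card S" and j: "j < card S" by auto
    have "(transpose_mat (sub_cols A S) * sub_cols A S) $$ (i, j) = col A (?l ! i) \<bullet> col A (?l ! j)"
      using i j fin sub_cols_carrier[OF fin, of A] by (simp add: col_sub_cols)
    also have "\<dots> = (transpose_mat A * A) $$ (?l ! i, ?l ! j)"
      using idx[OF i] idx[OF j] A_carrier by auto
    also have "\<dots> = 1\<^sub>m (card S) $$ (i, j)"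
      using A_orth idx[OF i] idx[OF j] i j fin by (simp add: nth_eq_iff_index_eq)
    finally show "(transpose_mat (sub_cols A S) * sub_cols A S) $$ (i, j) = 1\<^sub>m (card S) $$ (i, j)" .
  qed (use fin sub_cols_carrier[OF fin, of A] in auto)
qed

lemma pinv_sol_orthonormal_cols:
  assumes S: "S \<subseteq> {..<n}" and x: "x \<in> carrier_vec n"
  shows "pinv_sol A S (A *\<^sub>v x) = restrict_vec S x"
proof -
  have fin: "finite S" using S finite_subset by blast
  have AS: "sub_cols A S \<in> carrier_mat m (card S)"
    using sub_cols_carrier[OF fin, of A] A_carrier by simp
  have "(transpose_mat (sub_cols A S) *\<^sub>v (A *\<^sub>v x)) $ card {j \<in> S. j < i} = x $ i"
    if i: "i \<in> S" for i
  proof -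
    have "card {j \<in> S. j < i} < card S"
      using i fin by (intro psubset_card_mono) auto
    then have "(transpose_mat (sub_cols A S) *\<^sub>v (A *\<^sub>v x)) $ card {j \<in> S. j < i}
        = col A i \<bullet> (A *\<^sub>v x)"
      using AS col_sub_cols_card_less[OF S i] by simp
    also have "\<dots> = (transpose_mat A *\<^sub>v (A *\<^sub>v x)) $ i" using A_carrier S i by auto
    finally show ?thesis using transpose_mult_mat_vec_cancel[OF x] by simp
  qed
  then show ?thesis
    unfolding pinv_sol_def restrict_vec_def pinv_orthonormal_cols[OF AS orthonormal_cols_sub_cols[OF S]]
    using A_carrier x by (intro eq_vecI) auto
qed

context
  fixes xs :: "real vec"
  assumes xs_carrier: "xs \<in> carrier_vec n"
begin

lemma sea_x_eq_restrict:
  assumes "X0 \<in> carrier_vec n"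
  shows "sea_x A (A *\<^sub>v xs) k \<eta> X0 t = restrict_vec (sea_S A (A *\<^sub>v xs) k \<eta> X0 t) xs"
  unfolding sea_x_def using pinv_sol_orthonormal_cols[OF sea_S_subset[OF A_carrier assms] xs_carrier] .

lemma sea_gradient:
  assumes "X0 \<in> carrier_vec n"
  shows "transpose_mat A *\<^sub>v (A *\<^sub>v sea_x A (A *\<^sub>v xs) k \<eta> X0 t - A *\<^sub>v xs)
     = restrict_vec (sea_S A (A *\<^sub>v xs) k \<eta> X0 t) xs - xs"
  using transpose_mult_residual xs_carrier by (simp add: sea_x_eq_restrict[OF assms])

lemma oracle_u_minus_sea_step_eq_0:
  assumes "X0 \<in> carrier_vec n"
  shows "oracle_u A xs (A *\<^sub>v xs) k \<eta> X0 t
     - \<eta> \<cdot>\<^sub>v (transpose_mat A *\<^sub>v (A *\<^sub>v sea_x A (A *\<^sub>v xs) k \<eta> X0 t - A *\<^sub>v xs)) = 0\<^sub>v n"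
  unfolding sea_gradient[OF assms] oracle_u_def restrict_vec_def supp_vec_def
  using xs_carrier by (intro eq_vecI) auto

lemma sea_x_eq_iff:
  assumes "X0 \<in> carrier_vec n"
  shows "sea_x A (A *\<^sub>v xs) k \<eta> X0 t = xs \<longleftrightarrow> supp_vec xs \<subseteq> sea_S A (A *\<^sub>v xs) k \<eta> X0 t"
  by (simp add: sea_x_eq_restrict[OF assms] restrict_vec_eq_iff)

lemma sea_residual_eq_0_iff:
  assumes X0: "X0 \<in> carrier_vec n"
  shows "A *\<^sub>v sea_x A (A *\<^sub>v xs) k \<eta> X0 t - A *\<^sub>v xs = 0\<^sub>v m
     \<longleftrightarrow> supp_vec xs \<subseteq> sea_S A (A *\<^sub>v xs) k \<eta> X0 t"
proof
  assume "A *\<^sub>v sea_x A (A *\<^sub>v xs) k \<eta> X0 t - A *\<^sub>v xs = 0\<^sub>v m"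
  moreover have "transpose_mat A *\<^sub>v 0\<^sub>v m = 0\<^sub>v n"
    using A_carrier by (intro eq_vecI) auto
  ultimately have "restrict_vec (sea_S A (A *\<^sub>v xs) k \<eta> X0 t) xs - xs = 0\<^sub>v n"
    using sea_gradient[OF X0, of k \<eta> t] by simp
  then have "restrict_vec (sea_S A (A *\<^sub>v xs) k \<eta> X0 t) xs = xs"
    using xs_carrier by (auto simp: restrict_vec_def vec_eq_iff)
  then show "supp_vec xs \<subseteq> sea_S A (A *\<^sub>v xs) k \<eta> X0 t"
    by (simp add: restrict_vec_eq_iff)
next
  assume "supp_vec xs \<subseteq> sea_S A (A *\<^sub>v xs) k \<eta> X0 t"
  then have "sea_x A (A *\<^sub>v xs) k \<eta> X0 t = xs" by (simp add: sea_x_eq_iff[OF X0])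
  then show "A *\<^sub>v sea_x A (A *\<^sub>v xs) k \<eta> X0 t - A *\<^sub>v xs = 0\<^sub>v m"
    using minus_cancel_vec[OF mult_mat_vec_carrier[OF A_carrier xs_carrier]] by simp
qed

lemma sea_X_nth:
  assumes X0: "X0 \<in> carrier_vec n" and i: "i < n"
  shows "sea_X A (A *\<^sub>v xs) k \<eta> X0 t $ i
     = X0 $ i + (\<Sum>s<t. if i \<in> sea_S A (A *\<^sub>v xs) k \<eta> X0 s then 0 else \<eta>) * xs $ i"
proof (induction t)
  case (Suc t)
  have "sea_X A (A *\<^sub>v xs) k \<eta> X0 (Suc t) $ i
      = sea_X A (A *\<^sub>v xs) k \<eta> X0 t $ i + (if i \<in> sea_S A (A *\<^sub>v xs) k \<eta> X0 t then 0 else \<eta>) * xs $ i"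
    using i xs_carrier sea_X_carrier[OF A_carrier X0]
    by (simp add: sea_X_Suc sea_gradient[OF X0] restrict_vec_def algebra_simps del: sea_X.simps)
  then show ?case using Suc.IH by (simp add: algebra_simps)
qed simp

lemma supp_sea_X_zero_init_subset_sea_S:
  assumes "card (supp_vec xs) \<le> k"
  shows "supp_vec (sea_X A (A *\<^sub>v xs) k \<eta> (0\<^sub>v n) t) \<subseteq> sea_S A (A *\<^sub>v xs) k \<eta> (0\<^sub>v n) t"
proof -
  have "supp_vec (sea_X A (A *\<^sub>v xs) k \<eta> (0\<^sub>v n) t) \<subseteq> supp_vec xs"
    using sea_X_carrier[OF A_carrier zero_carrier_vec, of "A *\<^sub>v xs" k \<eta> t] xs_carrier
    by (auto simp: supp_vec_def sea_X_nth simp del: sea_X.simps)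
  then have "card (supp_vec (sea_X A (A *\<^sub>v xs) k \<eta> (0\<^sub>v n) t)) \<le> k"
    using assms card_mono[OF finite_supp_vec] le_trans by blast
  then show ?thesis unfolding sea_S_def by (rule supp_vec_subset_largest_k)
qed

lemma sea_X_zero_init_eq_0_iff:
  assumes "\<eta> > 0" and "i \<in> supp_vec xs"
  shows "sea_X A (A *\<^sub>v xs) k \<eta> (0\<^sub>v n) t $ i = 0 \<longleftrightarrow> (\<forall>s<t. i \<in> sea_S A (A *\<^sub>v xs) k \<eta> (0\<^sub>v n) s)"
proof -
  have "i < n" and "xs $ i \<noteq> 0" using assms(2) xs_carrier by (auto simp: supp_vec_def)
  then have "sea_X A (A *\<^sub>v xs) k \<eta> (0\<^sub>v n) t $ i = 0
      \<longleftrightarrow> (\<Sum>s<t. if i \<in> sea_S A (A *\<^sub>v xs) k \<eta> (0\<^sub>v n) s then 0 else \<eta>) = 0"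
    by (simp add: sea_X_nth del: sea_X.simps)
  also have "\<dots> \<longleftrightarrow> (\<forall>s<t. i \<in> sea_S A (A *\<^sub>v xs) k \<eta> (0\<^sub>v n) s)"
    using assms(1) by (auto simp: sum_nonneg_eq_0_iff)
  finally show ?thesis .
qed

lemma sea_S_zero_init_covers_supp:
  assumes "\<eta> > 0" and "card (supp_vec xs) \<le> k"
  shows "\<exists>s\<le>k. supp_vec xs \<subseteq> sea_S A (A *\<^sub>v xs) k \<eta> (0\<^sub>v n) s"
proof (rule ccontr)
  let ?X = "sea_X A (A *\<^sub>v xs) k \<eta> (0\<^sub>v n)" and ?S = "sea_S A (A *\<^sub>v xs) k \<eta> (0\<^sub>v n)"
  assume "\<not> ?thesis"
  then have "\<forall>s. \<exists>i. s \<le> k \<longrightarrow> i \<in> supp_vec xs - ?S s" by blast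
  then obtain f where f: "\<And>s. s \<le> k \<Longrightarrow> f s \<in> supp_vec xs - ?S s" by metis
  have selected_before: "f s \<in> ?S s'" if "s \<le> k" and "s' < s" for s s'
  proof -
    have "f s \<notin> supp_vec (?X s)"
      using f[OF \<open>s \<le> k\<close>] supp_sea_X_zero_init_subset_sea_S[OF assms(2)] by blast
    moreover have "f s < dim_vec (?X s)"
      using f[OF \<open>s \<le> k\<close>] xs_carrier
        sea_X_carrier[OF A_carrier zero_carrier_vec, of "A *\<^sub>v xs" k \<eta> s]
      by (auto simp: supp_vec_def)
    ultimately have "?X s $ f s = 0" by (simp add: supp_vec_def)
    then show ?thesis using sea_X_zero_init_eq_0_iff[OF assms(1)] f that by blast
  qed
  have "inj_on f {..k}"
    by (rule linorder_inj_onI') (use f selected_before in fastforce)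
  then have "card {..k} \<le> card (supp_vec xs)"
    using f by (intro card_inj_on_le) (auto simp: finite_supp_vec)
  then show False using assms(2) by simp
qed

end

end

theorem corollaryC7:
  fixes A :: "real mat" and xs y :: "real vec" and m n k :: nat
  assumes "0 < k" and "k \<le> n" and "n \<le> m"
    and "A \<in> carrier_mat m n"
    and "transpose_mat A * A = 1\<^sub>m n"
    and "xs \<in> carrier_vec n"
    and "card (supp_vec xs) \<le> k"
    and "y = A *\<^sub>v xs"
  shows "(\<forall>X0 \<eta>. X0 \<in> carrier_vec n \<longrightarrow> \<eta> > 0 \<longrightarrow>
            (SUP t. norminf_vec (oracle_u A xs y k \<eta> X0 t
               - \<eta> \<cdot>\<^sub>v (transpose_mat A *\<^sub>v (A *\<^sub>v sea_x A y k \<eta> X0 t - y)))) = 0)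
       \<and> (\<forall>\<eta> N tb. \<eta> > 0 \<longrightarrow> N > k + 1 \<longrightarrow> tb < N \<longrightarrow>
            (\<forall>t'<N. norm2_vec (A *\<^sub>v sea_x A y k \<eta> (0\<^sub>v n) tb - y)
                     \<le> norm2_vec (A *\<^sub>v sea_x A y k \<eta> (0\<^sub>v n) t' - y)) \<longrightarrow>
            supp_vec xs \<subseteq> sea_S A y k \<eta> (0\<^sub>v n) tb
            \<and> sea_x A y k \<eta> (0\<^sub>v n) tb = xs)"
proof (intro conjI allI impI)
  fix X0 :: "real vec" and \<eta> :: real
  assume X0: "X0 \<in> carrier_vec n"
  show "(SUP t. norminf_vec (oracle_u A xs y k \<eta> X0 t
      - \<eta> \<cdot>\<^sub>v (transpose_mat A *\<^sub>v (A *\<^sub>v sea_x A y k \<eta> X0 t - y)))) = 0"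
    by (simp add: assms(8) oracle_u_minus_sea_step_eq_0[OF assms(4-6) X0] norminf_vec_zero)
next
  fix \<eta> :: real and N tb :: nat
  assume "\<eta> > 0" and "N > k + 1" and "tb < N"
    and best: "\<forall>t'<N. norm2_vec (A *\<^sub>v sea_x A y k \<eta> (0\<^sub>v n) tb - y)
                     \<le> norm2_vec (A *\<^sub>v sea_x A y k \<eta> (0\<^sub>v n) t' - y)"
  note residual = sea_residual_eq_0_iff[OF assms(4-6) zero_carrier_vec, folded assms(8)]
  have dim_y: "dim_vec y = m" using assms(4,8) by simp
  obtain s where "s \<le> k" and "supp_vec xs \<subseteq> sea_S A y k \<eta> (0\<^sub>v n) s"
    using sea_S_zero_init_covers_supp[OF assms(4-6) \<open>\<eta> > 0\<close> assms(7)] assms(8) by blast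
  then have "norm2_vec (A *\<^sub>v sea_x A y k \<eta> (0\<^sub>v n) s - y) = 0"
    using residual dim_y by (simp add: norm2_vec_eq_0_iff)
  moreover have "s < N" using \<open>s \<le> k\<close> \<open>N > k + 1\<close> by linarith
  ultimately have "norm2_vec (A *\<^sub>v sea_x A y k \<eta> (0\<^sub>v n) tb - y) = 0"
    using best norm2_vec_nonneg by (metis antisym)
  then have "A *\<^sub>v sea_x A y k \<eta> (0\<^sub>v n) tb - y = 0\<^sub>v m"
    using dim_y by (simp add: norm2_vec_eq_0_iff)
  then show "supp_vec xs \<subseteq> sea_S A y k \<eta> (0\<^sub>v n) tb"
    using residual by blast
  then show "sea_x A y k \<eta> (0\<^sub>v n) tb = xs"
    using sea_x_eq_iff[OF assms(4-6) zero_carrier_vec] assms(8) by blast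
qed

end
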